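(* Let $\alpha=(x,u')$ and $\beta=(y,v')$ be points of $\mathcal{S}$ with $x\neq y$, $u'\neq v'$, $u'\notin y'^{\perp}$ and $v'\notin x'^{\perp}$ (perps taken in $S'$). Then $|\{\alpha,\beta\}^{\perp}|\geq 3$ in $\mathcal{S}$.
   Context: Let $S=(P,L)$ and $S'=(P',L')$ be generalized quadrangles of order $(2,2)$ (every line has 3 points, every point lies on 3 lines, and for each point $x$ and line $l\not\ni x$ exactly one point of $l$ is collinear with $x$), with an isomorphism $x\mapsto x'$ from $S$ to $S'$. In a point-line geometry, $x^{\perp}$ is $x$ together with all points collinear with $x$, and $A^{\perp}=\bigcap_{a\in A}a^{\perp}$. A triad is a set of three pairwise non-collinear points, complete if $|T^{\perp}|=3$. The geometry $\mathcal{S}=(\mathcal{P},\mathcal{L})$ has point set $\mathcal{P}=\{(x,y')\in P\times P':y'\in x'^{\perp}\}$ and lines all $3$-subsets $\{(x,u'),(y,v'),(z,w')\}$ of $\mathcal{P}$ where $T=\{x,y,z\}$ (three distinct points) is a line or a complete triad of $S$ and $\{u',v',w'\}=T'^{\perp}$ in $S'$ with $u',v',w'$ distinct. *)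

theory Defs
  imports Main
begin

definition collinear :: "'a set set \<Rightarrow> 'a \<Rightarrow> 'a \<Rightarrow> bool" where
  "collinear L x y \<longleftrightarrow> (\<exists>l\<in>L. x \<in> l \<and> y \<in> l)"

definition perp :: "'a set \<Rightarrow> 'a set set \<Rightarrow> 'a \<Rightarrow> 'a set" where
  "perp P L x = {y \<in> P. y = x \<or> collinear L x y}"

definition setperp :: "'a set \<Rightarrow> 'a set set \<Rightarrow> 'a set \<Rightarrow> 'a set" where
  "setperp P L A = {y \<in> P. \<forall>a\<in>A. y \<in> perp P L a}"

definition GQ22 :: "'a set \<Rightarrow> 'a set set \<Rightarrow> bool" where
  "GQ22 P L \<longleftrightarrow>
     (\<forall>l\<in>L. l \<subseteq> P \<and> card l = 3) \<and>
     (\<forall>x\<in>P. card {l\<in>L. x \<in> l} = 3) \<and>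
     (\<forall>x\<in>P. \<forall>l\<in>L. x \<notin> l \<longrightarrow> (\<exists>!y. y \<in> l \<and> collinear L x y))"

definition isomorphism :: "'a set \<Rightarrow> 'a set set \<Rightarrow> 'b set \<Rightarrow> 'b set set \<Rightarrow> ('a \<Rightarrow> 'b) \<Rightarrow> bool" where
  "isomorphism P L P' L' f \<longleftrightarrow> bij_betw f P P' \<and> (\<lambda>l. f ` l) ` L = L'"

definition triad :: "'a set \<Rightarrow> 'a set set \<Rightarrow> 'a set \<Rightarrow> bool" where
  "triad P L T \<longleftrightarrow> T \<subseteq> P \<and> card T = 3 \<and>
     (\<forall>x\<in>T. \<forall>y\<in>T. x \<noteq> y \<longrightarrow> \<not> collinear L x y)"

definition complete_triad :: "'a set \<Rightarrow> 'a set set \<Rightarrow> 'a set \<Rightarrow> bool" where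
  "complete_triad P L T \<longleftrightarrow> triad P L T \<and> card (setperp P L T) = 3"

text \<open>The geometry \<open>\<S>\<close> built from S, S' and the isomorphism f.\<close>
definition bigP :: "'a set \<Rightarrow> 'b set \<Rightarrow> 'b set set \<Rightarrow> ('a \<Rightarrow> 'b) \<Rightarrow> ('a \<times> 'b) set" where
  "bigP P P' L' f = {(x, y'). x \<in> P \<and> y' \<in> P' \<and> y' \<in> perp P' L' (f x)}"

definition bigL :: "'a set \<Rightarrow> 'a set set \<Rightarrow> 'b set \<Rightarrow> 'b set set \<Rightarrow> ('a \<Rightarrow> 'b) \<Rightarrow> ('a \<times> 'b) set set" where
  "bigL P L P' L' f =
    {{(x, u'), (y, v'), (z, w')} | x u' y v' z w'.
       (x, u') \<in> bigP P P' L' f \<and> (y, v') \<in> bigP P P' L' f \<and> (z, w') \<in> bigP P P' L' f \<and>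
       x \<noteq> y \<and> y \<noteq> z \<and> x \<noteq> z \<and>
       ({x, y, z} \<in> L \<or> complete_triad P L {x, y, z}) \<and>
       {u', v', w'} = setperp P' L' (f ` {x, y, z}) \<and>
       u' \<noteq> v' \<and> v' \<noteq> w' \<and> u' \<noteq> w'}"

end

theory Submission
  imports Defs
begin

(* The three common neighbours W of x' and y' in S' give three points of the perp.
   For each W, a common neighbour z' of u', v' and W (any three points of GQ(2,2) have one)
   makes (z, W) collinear with both (x, u') and (y, v'). This collinearity rests on the
   regularity of GQ(2,2): for distinct x, z there is a t such that {x, z, t} is a line or a
   complete triad with {x, z, t}^perp = {x, z}^perp, and then (x, p), (z, q), (t, r) is a
   line of the product geometry whenever {p, q, r} = {x', z'}^perp. *)

lemma card_3_obtain_third: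
  assumes "card S = 3" "p \<in> S" "q \<in> S" "p \<noteq> q"
  obtains r where "S = {p, q, r}" "r \<noteq> p" "r \<noteq> q"
proof -
  have "card (S - {p, q}) = 1"
    using assms by (simp add: card_Diff_subset)
  then obtain r where r: "S - {p, q} = {r}"
    by (auto simp: card_1_singleton_iff)
  then have "S = {p, q, r}" "r \<noteq> p" "r \<noteq> q"
    using assms(2,3) by blast+
  then show thesis by (rule that)
qed

locale gq22 =
  fixes P :: "'a set" and L :: "'a set set"
  assumes gq22: "GQ22 P L"
begin

abbreviation col :: "'a \<Rightarrow> 'a \<Rightarrow> bool" where
  "col \<equiv> collinear L"

lemma line_subset: "l \<in> L \<Longrightarrow> l \<subseteq> P"
  using gq22 unfolding GQ22_def by blast

lemma card_line: "l \<in> L \<Longrightarrow> card l = 3"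
  using gq22 unfolding GQ22_def by blast

lemma card_lines_through: "a \<in> P \<Longrightarrow> card {l \<in> L. a \<in> l} = 3"
  using gq22 unfolding GQ22_def by blast

lemma ex1_collinear_on_line:
  assumes "a \<in> P" "l \<in> L" "a \<notin> l"
  shows "\<exists>!y. y \<in> l \<and> col a y"
  using gq22 assms unfolding GQ22_def by simp

lemma finite_line: "l \<in> L \<Longrightarrow> finite l"
  using card_line[of l] by (intro card_ge_0_finite) simp

lemma collinearI: "l \<in> L \<Longrightarrow> a \<in> l \<Longrightarrow> b \<in> l \<Longrightarrow> col a b"
  unfolding collinear_def by blast

lemma collinearE:
  assumes "col a b"
  obtains l where "l \<in> L" "a \<in> l" "b \<in> l"
  using assms unfolding collinear_def by blast

lemma collinear_sym: "col a b \<Longrightarrow> col b a"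
  unfolding collinear_def by blast

lemma collinear_in_points: "col a b \<Longrightarrow> a \<in> P \<and> b \<in> P"
  by (auto elim: collinearE dest: line_subset)

lemma line_through:
  assumes "a \<in> P"
  obtains l where "l \<in> L" "a \<in> l"
proof -
  have "{l \<in> L. a \<in> l} \<noteq> {}"
    using card_lines_through[OF assms] by (metis card.empty zero_neq_numeral)
  then show thesis using that by blast
qed

lemma collinear_refl: "a \<in> P \<Longrightarrow> col a a"
  by (blast elim: line_through intro: collinearI)

lemma mem_perp_iff: "a \<in> P \<Longrightarrow> y \<in> perp P L a \<longleftrightarrow> col a y"
  unfolding perp_def using collinear_refl collinear_in_points by blast

lemma mem_setperp_pair_iff:
  "a \<in> P \<Longrightarrow> b \<in> P \<Longrightarrow> y \<in> setperp P L {a, b} \<longleftrightarrow> col a y \<and> col b y"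
  unfolding setperp_def using mem_perp_iff collinear_in_points by auto

lemma setperp_insert: "setperp P L (insert a A) = perp P L a \<inter> setperp P L A"
  unfolding setperp_def perp_def by auto

definition projection :: "'a \<Rightarrow> 'a set \<Rightarrow> 'a" where
  "projection a l = (THE y. y \<in> l \<and> col a y)"

lemma projection:
  assumes "a \<in> P" "l \<in> L" "a \<notin> l"
  shows "projection a l \<in> l" "col a (projection a l)"
  using theI'[OF ex1_collinear_on_line[OF assms]] unfolding projection_def by blast+

lemma projection_unique:
  assumes "a \<in> P" "l \<in> L" "a \<notin> l" "y \<in> l" "col a y"
  shows "y = projection a l"
  using the1_equality[OF ex1_collinear_on_line[OF assms(1-3)]] assms(4,5)
  unfolding projection_def by simp

lemma unique_collinear_point_on_line:
  assumes "l \<in> L" "w \<notin> l" "a \<in> l" "b \<in> l" "col w a" "col w b"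
  shows "a = b"
proof -
  have "w \<in> P" using assms(5) collinear_in_points by blast
  then show ?thesis using projection_unique[OF _ assms(1,2)] assms(3-6) by metis
qed

lemma two_points_determine_line:
  assumes "l \<in> L" "m \<in> L" "a \<noteq> b" "a \<in> l" "b \<in> l" "a \<in> m" "b \<in> m"
  shows "l = m"
proof (rule ccontr)
  assume "l \<noteq> m"
  with assms(1,2) have "\<not> m \<subseteq> l"
    by (metis card_line card_subset_eq finite_line)
  then obtain c where c: "c \<in> m" "c \<notin> l" by blast
  have "col c a" "col c b" using collinearI assms c by blast+
  then show False
    using unique_collinear_point_on_line[OF assms(1) c(2) assms(4,5)] assms(3) by blast
qed

lemma on_line_if_collinear_with_two:
  assumes "l \<in> L" "a \<in> l" "b \<in> l" "a \<noteq> b" "col c a" "col c b"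
  shows "c \<in> l"
  using unique_collinear_point_on_line[OF assms(1) _ assms(2,3,5,6)] assms(4) by blast

lemma third_point_of_line:
  assumes "l \<in> L" "a \<in> l" "b \<in> l" "a \<noteq> b"
  obtains c where "l = {a, b, c}" "c \<noteq> a" "c \<noteq> b"
  using card_3_obtain_third[OF card_line] assms by blast

lemma other_line_through:
  assumes "a \<in> P"
  obtains m where "m \<in> L" "a \<in> m" "m \<noteq> m1" "m \<noteq> m2"
proof -
  have "card {l \<in> L. a \<in> l} - card {m1, m2} \<le> card ({l \<in> L. a \<in> l} - {m1, m2})"
    by (rule diff_card_le_card_Diff) simp
  moreover have "card {m1, m2} \<le> 2"
    by (simp add: card_insert_if)
  ultimately have "{l \<in> L. a \<in> l} - {m1, m2} \<noteq> {}"
    using card_lines_through[OF assms] by fastforce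
  then show thesis using that by blast
qed

lemma not_collinear_on_distinct_lines:
  assumes "l \<in> L" "m \<in> L" "l \<noteq> m" "a \<in> l" "a \<in> m"
    and "p \<in> l" "p \<noteq> a" "q \<in> m" "q \<noteq> a"
  shows "\<not> col p q"
proof
  assume "col p q"
  moreover have "col p a" using collinearI assms(1,4,6) by blast
  ultimately have "p \<in> m"
    using on_line_if_collinear_with_two[OF assms(2,5,8)] assms(9) by blast
  then show False
    using two_points_determine_line[OF assms(1,2,7,6,4)] assms(3,5) by blast
qed

lemma no_four_noncollinear_neighbours:
  assumes col: "col c p1" "col c p2" "col c p3" "col c p4"
    and ncol: "\<not> col p1 p2" "\<not> col p1 p3" "\<not> col p1 p4"
      "\<not> col p2 p3" "\<not> col p2 p4" "\<not> col p3 p4"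
  shows False
proof -
  obtain m1 where m1: "m1 \<in> L" "c \<in> m1" "p1 \<in> m1" using col(1) by (rule collinearE)
  obtain m2 where m2: "m2 \<in> L" "c \<in> m2" "p2 \<in> m2" using col(2) by (rule collinearE)
  obtain m3 where m3: "m3 \<in> L" "c \<in> m3" "p3 \<in> m3" using col(3) by (rule collinearE)
  obtain m4 where m4: "m4 \<in> L" "c \<in> m4" "p4 \<in> m4" using col(4) by (rule collinearE)
  have "m1 \<noteq> m2" using m1 m2 ncol(1) collinearI by blast
  moreover have "m1 \<noteq> m3" using m1 m3 ncol(2) collinearI by blast
  moreover have "m1 \<noteq> m4" using m1 m4 ncol(3) collinearI by blast
  moreover have "m2 \<noteq> m3" using m2 m3 ncol(4) collinearI by blast
  moreover have "m2 \<noteq> m4" using m2 m4 ncol(5) collinearI by blast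
  moreover have "m3 \<noteq> m4" using m3 m4 ncol(6) collinearI by blast
  ultimately have "card {m1, m2, m3, m4} = 4" by simp
  moreover have "{m1, m2, m3, m4} \<subseteq> {l \<in> L. c \<in> l}" using m1 m2 m3 m4 by simp
  moreover have "c \<in> P" using col(1) collinear_in_points by blast
  then have "finite {l \<in> L. c \<in> l}" "card {l \<in> L. c \<in> l} = 3"
    using card_lines_through[of c] by (simp_all add: card_ge_0_finite)
  ultimately show False
    using card_mono[of "{l \<in> L. c \<in> l}" "{m1, m2, m3, m4}"] by simp
qed

lemma setperp_eq_line:
  assumes "l \<in> L" "A \<subseteq> l" "a \<in> A" "b \<in> A" "a \<noteq> b"
  shows "setperp P L A = l"
proof
  show "setperp P L A \<subseteq> l"
  proof
    fix w assume "w \<in> setperp P L A"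
    then have "w \<in> perp P L a" "w \<in> perp P L b"
      using assms(3,4) unfolding setperp_def by blast+
    moreover have "a \<in> P" "b \<in> P" using assms line_subset by blast+
    ultimately have "col w a" "col w b"
      using mem_perp_iff collinear_sym by blast+
    then show "w \<in> l"
      using on_line_if_collinear_with_two assms by blast
  qed
next
  show "l \<subseteq> setperp P L A"
  proof
    fix w assume "w \<in> l"
    then have "w \<in> perp P L a" if "a \<in> A" for a
      using that assms(1,2) line_subset collinearI mem_perp_iff by blast
    moreover have "w \<in> P" using \<open>w \<in> l\<close> assms(1) line_subset by blast
    ultimately show "w \<in> setperp P L A" unfolding setperp_def by blast
  qed
qed

lemma setperp_noncollinear_pair:
  assumes X: "X \<in> P" and Z: "Z \<in> P" and XZ: "\<not> col X Z"
  shows "setperp P L {X, Z} = projection Z ` {l \<in> L. X \<in> l}"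
    and "inj_on (projection Z) {l \<in> L. X \<in> l}"
proof -
  have Z_off: "Z \<notin> l" if "l \<in> L" "X \<in> l" for l
    using XZ collinearI that by blast
  have proj: "projection Z l \<in> l" "col Z (projection Z l)" "projection Z l \<noteq> X"
    if "l \<in> L" "X \<in> l" for l
    using projection[OF Z that(1) Z_off[OF that]] XZ collinear_sym by blast+
  show "setperp P L {X, Z} = projection Z ` {l \<in> L. X \<in> l}"
  proof
    show "setperp P L {X, Z} \<subseteq> projection Z ` {l \<in> L. X \<in> l}"
    proof
      fix w assume "w \<in> setperp P L {X, Z}"
      then have w: "col X w" "col Z w" using mem_setperp_pair_iff X Z by blast+
      obtain l where l: "l \<in> L" "X \<in> l" "w \<in> l" using w(1) by (rule collinearE)
      then have "w = projection Z l"
        using projection_unique[OF Z l(1) Z_off[OF l(1,2)]] w(2) by blast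
      then show "w \<in> projection Z ` {l \<in> L. X \<in> l}" using l by blast
    qed
  next
    show "projection Z ` {l \<in> L. X \<in> l} \<subseteq> setperp P L {X, Z}"
    proof
      fix w assume "w \<in> projection Z ` {l \<in> L. X \<in> l}"
      then obtain l where l: "l \<in> L" "X \<in> l" "w = projection Z l" by blast
      then have "col X w" "col Z w" using proj[OF l(1,2)] collinearI by blast+
      then show "w \<in> setperp P L {X, Z}" using mem_setperp_pair_iff X Z by blast
    qed
  qed
  show "inj_on (projection Z) {l \<in> L. X \<in> l}"
  proof (rule inj_onI)
    fix l m assume "l \<in> {l \<in> L. X \<in> l}" "m \<in> {l \<in> L. X \<in> l}"
      "projection Z l = projection Z m"
    then show "l = m"
      using proj[of l] proj[of m] two_points_determine_line[of l m "projection Z l" X] by simp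
  qed
qed

lemma card_setperp_pair:
  assumes X: "X \<in> P" and Z: "Z \<in> P" and "X \<noteq> Z"
  shows "card (setperp P L {X, Z}) = 3"
proof (cases "col X Z")
  case True
  then obtain l where "l \<in> L" "X \<in> l" "Z \<in> l" by (rule collinearE)
  then show ?thesis
    using setperp_eq_line[of l "{X, Z}" X Z] card_line assms(3) by simp
next
  case False
  then show ?thesis
    using setperp_noncollinear_pair[OF X Z False] card_lines_through[OF X]
    by (simp add: card_image)
qed

lemma setperp_noncollinear_pair_not_collinear:
  assumes X: "X \<in> P" and Z: "Z \<in> P" and XZ: "\<not> col X Z"
    and a: "a \<in> setperp P L {X, Z}" and b: "b \<in> setperp P L {X, Z}" and "a \<noteq> b"
  shows "\<not> col a b"
proof
  assume "col a b"
  then obtain l where l: "l \<in> L" "a \<in> l" "b \<in> l" by (rule collinearE)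
  have "col X a" "col X b" "col Z a" "col Z b"
    using a b mem_setperp_pair_iff X Z by blast+
  then have "X \<in> l" "Z \<in> l"
    using on_line_if_collinear_with_two[OF l \<open>a \<noteq> b\<close>] by blast+
  with XZ l(1) show False using collinearI by blast
qed

lemma common_neighbours_project_alike:
  assumes X: "X \<in> P" and Z: "Z \<in> P" and XZ: "\<not> col X Z"
    and abc: "setperp P L {X, Z} = {a, b, c}" "a \<noteq> b" "a \<noteq> c" "b \<noteq> c"
    and l: "l \<in> L" "a \<in> l" "X \<notin> l" "Z \<notin> l"
  shows "projection b l = projection c l"
proof (rule ccontr)
  \<comment> \<open>otherwise c has the four pairwise non-collinear neighbours X, Z, a', b'\<close>
  define t where "t = projection b l"
  define a' where "a' = projection c l"
  assume "projection b l \<noteq> projection c l"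
  then have "t \<noteq> a'" unfolding t_def a'_def .
  have nbr: "col X a" "col Z a" "col X b" "col Z b" "col X c" "col Z c"
    using abc(1) mem_setperp_pair_iff[OF X Z] by blast+
  have ncol: "\<not> col a b" "\<not> col a c" "\<not> col b c"
    using setperp_noncollinear_pair_not_collinear[OF X Z XZ] abc by auto
  have "b \<in> P" "c \<in> P" using nbr collinear_in_points by blast+
  moreover have "b \<notin> l" "c \<notin> l" using ncol l collinearI by blast+
  ultimately have t: "t \<in> l" "col b t" and a': "a' \<in> l" "col c a'"
    using projection l(1) unfolding t_def a'_def by blast+
  have "t \<noteq> a" "a' \<noteq> a" using t a' ncol collinear_sym by blast+
  then have "\<not> col X t" "\<not> col Z t" "\<not> col X a'" "\<not> col Z a'"
    using unique_collinear_point_on_line[OF l(1)] l nbr t(1) a'(1) by metis+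
  have "t \<noteq> b" using t(1) \<open>b \<notin> l\<close> by blast
  then obtain m where m: "m \<in> L" "b \<in> m" "t \<in> m" using t(2) by (blast elim: collinearE)
  have "\<not> col c t"
    using unique_collinear_point_on_line[OF l(1) \<open>c \<notin> l\<close> t(1) a'(1)] a'(2) \<open>t \<noteq> a'\<close> by blast
  define b' where "b' = projection c m"
  have "c \<notin> m" using ncol m collinearI by blast
  then have b': "b' \<in> m" "col c b'"
    using projection \<open>c \<in> P\<close> m(1) unfolding b'_def by blast+
  have "b' \<noteq> b" "b' \<noteq> t" using b' ncol \<open>\<not> col c t\<close> collinear_sym by blast+
  have "X \<notin> m" "Z \<notin> m" using m \<open>\<not> col X t\<close> \<open>\<not> col Z t\<close> collinearI by blast+
  then have "\<not> col X b'" "\<not> col Z b'"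
    using unique_collinear_point_on_line[OF m(1)] m(2) b'(1) nbr \<open>b' \<noteq> b\<close> by metis+
  have "l \<noteq> m" using m(2) \<open>b \<notin> l\<close> by blast
  then have "\<not> col a' b'"
    using not_collinear_on_distinct_lines[OF l(1) m(1)] t(1) m(3) a'(1) b'(1)
      \<open>t \<noteq> a'\<close> \<open>b' \<noteq> t\<close> by metis
  show False
    using no_four_noncollinear_neighbours[of c X Z a' b'] nbr a'(2) b'(2) collinear_sym XZ
      \<open>\<not> col X a'\<close> \<open>\<not> col Z a'\<close> \<open>\<not> col X b'\<close> \<open>\<not> col Z b'\<close> \<open>\<not> col a' b'\<close> by blast
qed

lemma noncollinear_pair_regular:
  assumes X: "X \<in> P" and Z: "Z \<in> P" and XZ: "\<not> col X Z"
  obtains T where "T \<in> P" "\<not> col X T" "\<not> col Z T"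
    "setperp P L {X, Z} \<subseteq> perp P L T"
proof -
  have "X \<noteq> Z" using XZ collinear_refl[OF X] by blast
  then obtain a b c where abc: "setperp P L {X, Z} = {a, b, c}" "a \<noteq> b" "a \<noteq> c" "b \<noteq> c"
    using card_setperp_pair[OF X Z] card_3_iff by metis
  have nbr: "col X a" "col Z a" "col X b" "col Z b" "col X c"
    using abc(1) mem_setperp_pair_iff[OF X Z] by blast+
  have ncol: "\<not> col a b" "\<not> col a c"
    using setperp_noncollinear_pair_not_collinear[OF X Z XZ] abc by auto
  obtain la where la: "la \<in> L" "a \<in> la" "X \<in> la" using nbr(1) by (blast elim: collinearE)
  obtain lz where lz: "lz \<in> L" "a \<in> lz" "Z \<in> lz" using nbr(2) by (blast elim: collinearE)
  have "a \<in> P" using nbr collinear_in_points by blast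
  then obtain l where l: "l \<in> L" "a \<in> l" "l \<noteq> la" "l \<noteq> lz" by (rule other_line_through)
  have "a \<noteq> X" "a \<noteq> Z" using nbr XZ collinear_sym by blast+
  then have "X \<notin> l" "Z \<notin> l"
    using two_points_determine_line[OF la(1) l(1)] two_points_determine_line[OF lz(1) l(1)]
      la(2,3) lz(2,3) l(2-4) by blast+
  define t where "t = projection b l"
  have "b \<in> P" "b \<notin> l" using nbr collinear_in_points ncol l collinearI by blast+
  then have t: "t \<in> l" "col b t" using projection l(1) unfolding t_def by blast+
  have "t = projection c l"
    using common_neighbours_project_alike[OF X Z XZ abc l(1,2) \<open>X \<notin> l\<close> \<open>Z \<notin> l\<close>]
    unfolding t_def .
  moreover have "c \<in> P" "c \<notin> l"
    using nbr(5) collinear_in_points ncol(2) l(1,2) collinearI by blast+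
  ultimately have "col t c" using projection[OF _ l(1)] collinear_sym by metis
  moreover have "col t a" "col t b" using t l collinearI collinear_sym by blast+
  moreover have "t \<in> P" using t(1) l(1) line_subset by blast
  ultimately have "setperp P L {X, Z} \<subseteq> perp P L t"
    using abc(1) mem_perp_iff[OF \<open>t \<in> P\<close>] by auto
  moreover have "t \<noteq> a" using t(2) ncol collinear_sym by blast
  then have "\<not> col X t" "\<not> col Z t"
    using unique_collinear_point_on_line[OF l(1) _ l(2) t(1)] nbr(1,2) \<open>X \<notin> l\<close> \<open>Z \<notin> l\<close>
    by blast+
  ultimately show thesis using that \<open>t \<in> P\<close> by blast
qed

lemma line_or_complete_triad_through_pair:
  assumes X: "X \<in> P" and Z: "Z \<in> P" and "X \<noteq> Z"
  obtains T where "T \<in> P" "T \<noteq> X" "T \<noteq> Z" "{X, Z, T} \<in> L \<or> complete_triad P L {X, Z, T}"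
    "setperp P L {X, Z, T} = setperp P L {X, Z}"
proof (cases "col X Z")
  case True
  then obtain l where l: "l \<in> L" "X \<in> l" "Z \<in> l" by (rule collinearE)
  then obtain T where T: "l = {X, Z, T}" "T \<noteq> X" "T \<noteq> Z"
    using third_point_of_line assms(3) by blast
  have "setperp P L {X, Z, T} = l" "setperp P L {X, Z} = l"
    using setperp_eq_line[OF l(1), of _ X Z] T(1) assms(3) by auto
  moreover have "T \<in> P" using l(1) T(1) line_subset by blast
  ultimately show thesis using that T l(1) by simp
next
  case False
  then obtain T where T: "T \<in> P" "\<not> col X T" "\<not> col Z T" "setperp P L {X, Z} \<subseteq> perp P L T"
    using noncollinear_pair_regular X Z by blast
  have "T \<noteq> X" "T \<noteq> Z" using T(2,3) collinear_refl X Z by blast+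
  have perp_eq: "setperp P L {X, Z, T} = setperp P L {X, Z}"
    using T(4) setperp_insert[of T "{X, Z}"] by (simp add: insert_commute Int_absorb1)
  have "triad P L {X, Z, T}"
    unfolding triad_def using X Z T(1-3) False \<open>T \<noteq> X\<close> \<open>T \<noteq> Z\<close> assms(3) collinear_sym
    by (simp, blast)
  then have "complete_triad P L {X, Z, T}"
    unfolding complete_triad_def using perp_eq card_setperp_pair[OF X Z assms(3)] by simp
  then show thesis using that T(1) \<open>T \<noteq> X\<close> \<open>T \<noteq> Z\<close> perp_eq by blast
qed

lemma line_through_centerless_triad:
  assumes u: "u \<in> P" and v: "v \<in> P" and ncol: "\<not> col u c" "\<not> col v c"
    and no_center: "\<And>w. \<not> (col u w \<and> col v w \<and> col c w)"
    and l: "l \<in> L" "c \<in> l"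
  shows "l = {c, projection u l, projection v l}"
proof -
  define a b where "a = projection u l" and "b = projection v l"
  have "u \<notin> l" "v \<notin> l" using ncol l collinearI collinear_sym by blast+
  then have a: "a \<in> l" "col u a" and b: "b \<in> l" "col v b"
    using projection u v l(1) unfolding a_def b_def by blast+
  have "a \<noteq> b"
    using a b no_center[of a] collinearI[OF l(1) l(2) a(1)] by auto
  then obtain r where r: "l = {a, b, r}"
    using card_3_obtain_third[OF card_line[OF l(1)] a(1) b(1)] by blast
  moreover have "a \<noteq> c" "b \<noteq> c" using a(2) b(2) ncol by auto
  ultimately have "r = c" using l(2) by blast
  with r show ?thesis unfolding a_def b_def by auto
qed

lemma centerless_triad_collinear_projection:
  assumes u: "u \<in> P" and v: "v \<in> P" and ncol: "\<not> col u c" "\<not> col v c"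
    and no_center: "\<And>w. \<not> (col u w \<and> col v w \<and> col c w)"
    and l1: "l1 \<in> L" "c \<in> l1"
    and m: "m \<in> L" "u \<in> m" "projection u l1 \<in> m"
    and d: "d \<in> m" "d \<noteq> u" "d \<noteq> projection u l1"
    and l: "l \<in> L" "c \<in> l" "l \<noteq> l1"
  shows "col d (projection v l)"
proof -
  define a1 a b y
    where "a1 = projection u l1" and "a = projection u l" and "b = projection v l"
      and "y = projection d l"
  have "u \<notin> l1" "u \<notin> l" using ncol(1) l1 l collinearI collinear_sym by blast+
  then have a1: "a1 \<in> l1" "a1 \<in> m" "a1 \<noteq> c" and a: "a \<in> l" "col u a" "a \<noteq> c"
    using projection u l1(1) l(1) m(3) ncol(1) unfolding a1_def a_def by blast+
  have "d \<notin> l1"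
    using two_points_determine_line[OF l1(1) m(1) d(3)[folded a1_def]] a1(1,2) d(1)
      m(2) \<open>u \<notin> l1\<close> by blast
  then have "\<not> col d c"
    using on_line_if_collinear_with_two[OF l1(1) a1(1) l1(2) a1(3)] collinearI[OF m(1) d(1) a1(2)]
    by blast
  moreover have "d \<in> P" using d(1) m(1) line_subset by blast
  ultimately have y: "y \<in> l" "col d y"
    using projection[OF _ l(1)] l(2) collinearI[OF l(1)] unfolding y_def by blast+
  have "y \<noteq> a"
  proof
    assume "y = a"
    then have "a \<in> m"
      using on_line_if_collinear_with_two[OF m(1,2) d(1) d(2)[symmetric]] y(2) a(2) collinear_sym
      by blast
    then have "a \<in> l1"
      using on_line_if_collinear_with_two[OF l1(1) a1(1) l1(2) a1(3)] collinearI[OF m(1) _ a1(2)]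
        collinearI[OF l(1) a(1) l(2)] by blast
    then show False
      using two_points_determine_line[OF l1(1) l(1) a(3)] l1(2) a(1) l(2,3) by blast
  qed
  moreover have "y \<noteq> c" using y(2) \<open>\<not> col d c\<close> by blast
  moreover have "l = {c, a, b}"
    using line_through_centerless_triad[OF u v ncol no_center l(1,2)] unfolding a_def b_def .
  ultimately have "y = b" using y(1) by blast
  then show ?thesis using y(2) unfolding b_def by simp
qed

lemma triad_has_center:
  assumes u: "u \<in> P" and v: "v \<in> P" and c: "c \<in> P"
    and ncol: "\<not> col u v" "\<not> col u c" "\<not> col v c"
  obtains w where "col u w" "col v w" "col c w"
proof (rule ccontr)
  assume "\<not> thesis"
  then have no_center: "\<not> (col u w \<and> col v w \<and> col c w)" for w using that by blast
  obtain l1 where l1: "l1 \<in> L" "c \<in> l1" using c by (rule line_through)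
  have "u \<notin> l1" using ncol(2) l1 collinearI collinear_sym by blast
  then have a1: "projection u l1 \<in> l1" "col u (projection u l1)" using projection u l1(1) by blast+
  then obtain m where m: "m \<in> L" "u \<in> m" "projection u l1 \<in> m" by (blast elim: collinearE)
  define d where "d = projection v m"
  have "v \<notin> m" using ncol(1) m collinearI by blast
  then have d: "d \<in> m" "col v d" using projection v m(1) unfolding d_def by blast+
  have "d \<noteq> u" using d(2) ncol(1) collinear_sym by blast
  moreover have "d \<noteq> projection u l1"
    using d(2) a1 no_center collinearI[OF l1(1) l1(2) a1(1)] by blast
  ultimately have d_col: "col d (projection v l)" if "l \<in> L" "c \<in> l" "l \<noteq> l1" for l
    using centerless_triad_collinear_projection[OF u v ncol(2,3) no_center l1 m d(1)] that
    by blast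
  \<comment> \<open>the v-projections onto the two other lines through c lie on the line through
    v and d, so together with c they form a triangle\<close>
  obtain l2 where l2: "l2 \<in> L" "c \<in> l2" "l2 \<noteq> l1" using c other_line_through by metis
  obtain l3 where l3: "l3 \<in> L" "c \<in> l3" "l3 \<noteq> l1" "l3 \<noteq> l2"
    using c other_line_through by metis
  define b2 b3 where "b2 = projection v l2" and "b3 = projection v l3"
  have "v \<notin> l2" "v \<notin> l3" using ncol(3) l2 l3 collinearI collinear_sym by blast+
  then have b: "b2 \<in> l2" "col v b2" "b3 \<in> l3" "col v b3"
    using projection v l2(1) l3(1) unfolding b2_def b3_def by blast+
  have "b2 \<noteq> c" "b3 \<noteq> c" using b(2,4) ncol(3) by blast+
  have "v \<noteq> d" using \<open>v \<notin> m\<close> d(1) by blast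
  then obtain n where n: "n \<in> L" "v \<in> n" "d \<in> n" using d(2) collinearE by metis
  have "col b2 v" "col b2 d" "col b3 v" "col b3 d"
    using b d_col[OF l2] d_col[OF l3(1-3)] collinear_sym unfolding b2_def b3_def by blast+
  then have "b2 \<in> n" "b3 \<in> n"
    using on_line_if_collinear_with_two[OF n \<open>v \<noteq> d\<close>] by blast+
  then have "col b2 b3" using n(1) collinearI by blast
  then show False
    using not_collinear_on_distinct_lines[OF l2(1) l3(1) l3(4)[symmetric] l2(2) l3(2)]
      b(1,3) \<open>b2 \<noteq> c\<close> \<open>b3 \<noteq> c\<close> by blast
qed

lemma common_neighbour_of_collinear_pair:
  assumes "col p q" "r \<in> P"
  obtains w where "col p w" "col q w" "col r w"
proof -
  obtain l where l: "l \<in> L" "p \<in> l" "q \<in> l" using assms(1) by (rule collinearE)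
  show thesis
  proof (cases "r \<in> l")
    case True
    then show thesis using that l collinearI by blast
  next
    case False
    then have "projection r l \<in> l" "col r (projection r l)"
      using projection assms(2) l(1) by blast+
    then show thesis using that l collinearI by blast
  qed
qed

lemma common_neighbour_of_three:
  assumes p: "p \<in> P" and q: "q \<in> P" and r: "r \<in> P"
  obtains w where "col p w" "col q w" "col r w"
proof -
  consider "col p q" | "col p r" | "col q r" | "\<not> col p q" "\<not> col p r" "\<not> col q r" by blast
  then show thesis
  proof cases
    case 1
    then show thesis using that common_neighbour_of_collinear_pair r by metis
  next
    case 2
    then show thesis using that common_neighbour_of_collinear_pair q by metis
  next
    case 3
    then show thesis using that common_neighbour_of_collinear_pair p by metis
  next
    case 4
    then show thesis using that triad_has_center p q r by metis
  qed
qed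

lemma finite_points: "finite P"
proof (cases "P = {}")
  case False
  then obtain x where x: "x \<in> P" by blast
  have fin_pencil: "finite {l \<in> L. w \<in> l}" if "w \<in> P" for w
    using card_lines_through[OF that] by (intro card_ge_0_finite) simp
  define N where "N = \<Union>{l \<in> L. x \<in> l}"
  have "finite N"
    unfolding N_def using fin_pencil[OF x] finite_line by (intro finite_Union) auto
  moreover have "N \<subseteq> P" unfolding N_def using line_subset by blast
  ultimately have "finite (\<Union>w \<in> N. {l \<in> L. w \<in> l})"
    using fin_pencil by (intro finite_UN_I) auto
  then have "finite (\<Union>(\<Union>w \<in> N. {l \<in> L. w \<in> l}))"
    using finite_line by (rule finite_Union) auto
  moreover have "P \<subseteq> \<Union>(\<Union>w \<in> N. {l \<in> L. w \<in> l})"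
  proof
    fix z assume "z \<in> P"
    then obtain l where l: "l \<in> L" "z \<in> l" by (rule line_through)
    obtain w where "w \<in> l" "col x w"
      using projection[OF x l(1)] collinear_refl[OF x] by (cases "x \<in> l") blast+
    then have "w \<in> N" "w \<in> l" unfolding N_def collinear_def by blast+
    then show "z \<in> \<Union>(\<Union>w \<in> N. {l \<in> L. w \<in> l})" using l by blast
  qed
  ultimately show ?thesis by (rule finite_subset[rotated])
qed simp

end

locale gq22_isomorphism = S: gq22 P L + S': gq22 P' L'
  for P :: "'a set" and L :: "'a set set" and P' :: "'b set" and L' :: "'b set set" +
  fixes f :: "'a \<Rightarrow> 'b"
  assumes iso: "isomorphism P L P' L' f"
begin

lemma inj_on_f: "inj_on f P"
  using iso unfolding isomorphism_def bij_betw_def by blast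

lemma image_points: "f ` P = P'"
  using iso unfolding isomorphism_def bij_betw_def by blast

lemma image_lines: "(\<lambda>l. f ` l) ` L = L'"
  using iso unfolding isomorphism_def by blast

lemma collinear_image_iff:
  assumes "a \<in> P" "b \<in> P"
  shows "S'.col (f a) (f b) \<longleftrightarrow> S.col a b"
proof
  assume "S'.col (f a) (f b)"
  then obtain l' where l': "l' \<in> L'" "f a \<in> l'" "f b \<in> l'" by (rule S'.collinearE)
  then obtain l where l: "l \<in> L" "l' = f ` l" using image_lines by blast
  then have "a \<in> l" "b \<in> l"
    using l' assms inj_on_image_mem_iff[OF inj_on_f _ S.line_subset[OF l(1)]] by blast+
  then show "S.col a b" using l(1) S.collinearI by blast
next
  assume "S.col a b"
  then obtain l where "l \<in> L" "a \<in> l" "b \<in> l" by (rule S.collinearE)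
  moreover have "f ` l \<in> L'" using image_lines \<open>l \<in> L\<close> by blast
  ultimately show "S'.col (f a) (f b)" using S'.collinearI by blast
qed

lemma setperp_image:
  assumes A: "A \<subseteq> P"
  shows "setperp P' L' (f ` A) = f ` setperp P L A"
proof -
  have mem: "f y \<in> setperp P' L' (f ` A) \<longleftrightarrow> y \<in> setperp P L A" if y: "y \<in> P" for y
  proof -
    have "f y \<in> perp P' L' (f a) \<longleftrightarrow> y \<in> perp P L a" if "a \<in> A" for a
      using that A y S.mem_perp_iff S'.mem_perp_iff image_points collinear_image_iff by blast
    then show ?thesis using y image_points unfolding setperp_def by blast
  qed
  have "setperp P' L' (f ` A) \<subseteq> f ` P" using image_points unfolding setperp_def by blast
  moreover have "setperp P L A \<subseteq> P" unfolding setperp_def by blast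
  ultimately show ?thesis using mem by blast
qed

lemma mem_bigP_iff: "(a, w) \<in> bigP P P' L' f \<longleftrightarrow> a \<in> P \<and> S'.col (f a) w"
  unfolding bigP_def using S'.mem_perp_iff image_points S'.collinear_in_points by blast

lemma bigL_memI:
  assumes "(x, p) \<in> bigP P P' L' f" "(z, q) \<in> bigP P P' L' f" "(t, r) \<in> bigP P P' L' f"
    "x \<noteq> z" "z \<noteq> t" "x \<noteq> t" "{x, z, t} \<in> L \<or> complete_triad P L {x, z, t}"
    "{p, q, r} = setperp P' L' (f ` {x, z, t})" "p \<noteq> q" "q \<noteq> r" "p \<noteq> r"
  shows "{(x, p), (z, q), (t, r)} \<in> bigL P L P' L' f"
  unfolding bigL_def using assms by blast

lemma collinear_bigL:
  assumes x: "x \<in> P" and z: "z \<in> P" and "f x \<noteq> f z" and "p \<noteq> q"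
    and p: "p \<in> setperp P' L' {f x, f z}" and q: "q \<in> setperp P' L' {f x, f z}"
  shows "collinear (bigL P L P' L' f) (x, p) (z, q)"
proof -
  have "x \<noteq> z" using \<open>f x \<noteq> f z\<close> by blast
  then obtain t where t: "t \<in> P" "t \<noteq> x" "t \<noteq> z" "{x, z, t} \<in> L \<or> complete_triad P L {x, z, t}"
    "setperp P L {x, z, t} = setperp P L {x, z}"
    using S.line_or_complete_triad_through_pair x z by metis
  have perp_eq: "setperp P' L' (f ` {x, z, t}) = setperp P' L' {f x, f z}"
    using setperp_image[of "{x, z, t}"] setperp_image[of "{x, z}"] t(1,5) x z by simp
  have fx: "f x \<in> P'" and fz: "f z \<in> P'" using x z image_points by blast+
  obtain r where r: "setperp P' L' {f x, f z} = {p, q, r}" "r \<noteq> p" "r \<noteq> q"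
    using card_3_obtain_third[OF S'.card_setperp_pair[OF fx fz \<open>f x \<noteq> f z\<close>] p q \<open>p \<noteq> q\<close>] .
  have "r \<in> perp P' L' (f t)"
    using r(1) perp_eq[symmetric] unfolding setperp_def by blast
  then have "(t, r) \<in> bigP P P' L' f" using t(1) unfolding bigP_def setperp_def perp_def by blast
  moreover have "(x, p) \<in> bigP P P' L' f" "(z, q) \<in> bigP P P' L' f"
    using p q x z S'.mem_setperp_pair_iff[OF fx fz] mem_bigP_iff by blast+
  ultimately have "{(x, p), (z, q), (t, r)} \<in> bigL P L P' L' f"
    using bigL_memI \<open>x \<noteq> z\<close> t(2-4) r perp_eq \<open>p \<noteq> q\<close> by simp
  then show ?thesis unfolding collinear_def by blast
qed

lemma lift_common_neighbour:
  assumes "(x, u) \<in> bigP P P' L' f" "(y, v) \<in> bigP P P' L' f"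
    and nu: "\<not> S'.col (f y) u" and nv: "\<not> S'.col (f x) v"
    and W: "S'.col (f x) W" "S'.col (f y) W"
  obtains z where "(z, W) \<in> setperp (bigP P P' L' f) (bigL P L P' L' f) {(x, u), (y, v)}"
proof -
  have x: "x \<in> P" "S'.col (f x) u" and y: "y \<in> P" "S'.col (f y) v"
    using assms(1,2) mem_bigP_iff by blast+
  have "u \<in> P'" "v \<in> P'" "W \<in> P'" using x(2) y(2) W(1) S'.collinear_in_points by blast+
  then obtain Z where Z: "S'.col u Z" "S'.col v Z" "S'.col W Z"
    by (rule S'.common_neighbour_of_three)
  then have "Z \<in> P'" using S'.collinear_in_points by blast
  then obtain z where z: "z \<in> P" "f z = Z" using image_points by blast
  have fx: "f x \<in> P'" and fy: "f y \<in> P'" using x(1) y(1) image_points by blast+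
  have Z': "S'.col (f z) u" "S'.col (f z) v" "S'.col (f z) W"
    using Z z(2) S'.collinear_sym by auto
  have "f x \<noteq> f z" "f y \<noteq> f z" using nu nv Z'(1,2) by auto
  moreover have "u \<noteq> W" "v \<noteq> W" using nu nv W by auto
  moreover have "u \<in> setperp P' L' {f x, f z}" "W \<in> setperp P' L' {f x, f z}"
    "v \<in> setperp P' L' {f y, f z}" "W \<in> setperp P' L' {f y, f z}"
    using S'.mem_setperp_pair_iff[OF fx \<open>Z \<in> P'\<close>] S'.mem_setperp_pair_iff[OF fy \<open>Z \<in> P'\<close>]
      z(2) x(2) y(2) W Z' by auto
  ultimately have "collinear (bigL P L P' L' f) (x, u) (z, W)"
    "collinear (bigL P L P' L' f) (y, v) (z, W)"
    using collinear_bigL x(1) y(1) z(1) by blast+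
  moreover have "(z, W) \<in> bigP P P' L' f"
    using mem_bigP_iff z Z(3) S'.collinear_sym by blast
  ultimately show thesis
    using that unfolding setperp_def perp_def by blast
qed

lemma finite_bigP: "finite (bigP P P' L' f)"
  using finite_subset[of "bigP P P' L' f" "P \<times> P'"] S.finite_points S'.finite_points
  unfolding bigP_def by blast

end

theorem lemma3p2:
  fixes P :: "'a set" and L :: "'a set set"
    and P' :: "'b set" and L' :: "'b set set" and f :: "'a \<Rightarrow> 'b"
    and x y :: 'a and u' v' :: 'b
  assumes "GQ22 P L" and "GQ22 P' L'" and "isomorphism P L P' L' f"
    and "(x, u') \<in> bigP P P' L' f" and "(y, v') \<in> bigP P P' L' f"
    and "x \<noteq> y" and "u' \<noteq> v'"
    and "u' \<notin> perp P' L' (f y)" and "v' \<notin> perp P' L' (f x)"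
  shows "card (setperp (bigP P P' L' f) (bigL P L P' L' f) {(x, u'), (y, v')}) \<ge> 3"
proof -
  interpret gq22_isomorphism P L P' L' f
    using assms(1-3) by (simp add: gq22_isomorphism_def gq22_isomorphism_axioms_def gq22_def)
  let ?perp = "setperp (bigP P P' L' f) (bigL P L P' L' f) {(x, u'), (y, v')}"
  have x: "x \<in> P" and y: "y \<in> P" using assms(4,5) mem_bigP_iff by blast+
  then have fx: "f x \<in> P'" and fy: "f y \<in> P'" using image_points by blast+
  have "f x \<noteq> f y" using inj_on_contraD[OF inj_on_f assms(6) x y] .
  have nu: "\<not> S'.col (f y) u'" and nv: "\<not> S'.col (f x) v'"
    using assms(8,9) S'.mem_perp_iff fx fy by blast+
  have "W \<in> snd ` ?perp" if "W \<in> setperp P' L' {f x, f y}" for W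
  proof -
    have "S'.col (f x) W" "S'.col (f y) W" using that S'.mem_setperp_pair_iff[OF fx fy] by blast+
    then obtain z where "(z, W) \<in> ?perp" using lift_common_neighbour[OF assms(4,5) nu nv] by blast
    then show ?thesis using image_eqI[of W snd "(z, W)"] by simp
  qed
  moreover have fin: "finite ?perp"
    using finite_bigP by (rule finite_subset[rotated]) (auto simp: setperp_def)
  ultimately have "card (setperp P' L' {f x, f y}) \<le> card (snd ` ?perp)"
    by (intro card_mono finite_imageI) auto
  also have "\<dots> \<le> card ?perp" using fin by (rule card_image_le)
  finally show ?thesis
    using S'.card_setperp_pair[OF fx fy \<open>f x \<noteq> f y\<close>] by simp
qed

end
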